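(* Let $\pi_1,\pi_2,\pi_3$ be Borel probability measures on $[0,\infty)$ such that $\mu=\pi_1\times\pi_2\times\pi_3$ satisfies $R\mu=\mu$, where $R(r,s,t)=(t+[r-s]^+,\,t+[s-r]^+,\,r\wedge s)$. Let $S$ be a finite hexagonal domain, and generate the flow field $\eta$ on $\mathbb{E}(\bar S)$ from the following independent families: - inputs on the ascending incoming edges, i.i.d. with law $\pi_1$; - inputs on the descending incoming edges, i.i.d. with law $\pi_2$; - births $(\xi_y)_{y\in S}$, i.i.d. with law $\pi_3$. Then the family of outputs $(\eta(e))$, over all outgoing edges $e$ of $S$, consists of independent random variables. Moreover $\eta(e)$ has law $\pi_1$ for every ascending outgoing edge $e$, and law $\pi_2$ for every descending outgoing edge $e$.
   Context: Lattice and edges. $\tilde{\mathbb{Z}}^2=\{(t,x)\in\mathbb{Z}^2:t+x\text{ even}\}$; edges join points at Euclidean distance $\sqrt2$. For $y=(t,x)$ write - $e^\nearrow_y=\langle(t,x),(t+1,x+1)\rangle$, - $e^\searrow_y=\langle(t,x),(t+1,x-1)\rangle$, - $e^\swarrow_y=\langle(t-1,x-1),(t,x)\rangle$, - $e^\nwarrow_y=\langle(t-1,x+1),(t,x)\rangle$. Hexagonal domain. A finite hexagonal domain is a set $S=\{(t,x)\in\tilde{\mathbb{Z}}^2: t_0\le t\le t_1,\ x_{t,-}\le x\le x_{t,+}\}$ where: - $t_0<t_1$ are integers; - $x_{t,-}\le x_{t,+}$ are integers with $t+x_{t,\pm}$ even; - for some $t^\pm_{01}\in[t_0,t_1]$ one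 has $x_{t+1,\pm}-x_{t,\pm}=\pm1$ for $t_0\le t<t^\pm_{01}$, and $x_{t+1,\pm}-x_{t,\pm}=\mp1$ for $t^\pm_{01}\le t<t_1$. Associated sets and edge types. $\bar S$ is $S$ together with all lattice points joined by an edge to a point of $S$, and $\mathbb{E}(\bar S)$ is the set of edges with an endpoint in $S$. - An incoming edge is $\langle y',y\rangle$ with $y\in S$, $y'\notin S$, $t(y')=t(y)-1$. It is ascending if it is $e^\swarrow_y$ and descending if it is $e^\nwarrow_y$. - An outgoing edge is $\langle y,y'\rangle$ with $y\in S$, $y'\notin S$, $t(y')=t(y)+1$. It is ascending if it is $e^\nearrow_y$ and descending if it is $e^\searrow_y$. Generated flow field. Defined recursively in increasing $t$: for $y\in S$, with $\zeta^+_y=\eta(e^\swarrow_y)$ and $\zeta^-_y=\eta(e^\nwarrow_y)$ (inputs or previously defined values), set $$\eta(e^\nearrow_y)=\xi_y+[\zeta^+_y-\zeta^-_y]^+,\qquad \eta(e^\searrow_y)=\xi_y+[\zeta^-_y-\zeta^+_y]^+.$$ *)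

theory Defs
  imports "HOL-Probability.Probability"
begin

text \<open>Lattice points are pairs (t, x) of integers; an edge is represented by the pair
  (lower endpoint, upper endpoint), the lower endpoint having time coordinate one less.\<close>

type_synonym point = "int \<times> int"
type_synonym edge = "point \<times> point"

definition hexagonal_domain :: "point set \<Rightarrow> bool" where
  "hexagonal_domain S \<longleftrightarrow>
     (\<exists>(t0::int) (t1::int) (xm::int \<Rightarrow> int) (xp::int \<Rightarrow> int) (tm::int) (tp::int).
        t0 < t1 \<and> t0 \<le> tm \<and> tm \<le> t1 \<and> t0 \<le> tp \<and> tp \<le> t1 \<and>
        (\<forall>t. t0 \<le> t \<and> t \<le> t1 \<longrightarrow> xm t \<le> xp t \<and> even (t + xm t) \<and> even (t + xp t)) \<and>
        (\<forall>t. t0 \<le> t \<and> t < tp \<longrightarrow> xp (t + 1) - xp t = 1) \<and>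
        (\<forall>t. tp \<le> t \<and> t < t1 \<longrightarrow> xp (t + 1) - xp t = -1) \<and>
        (\<forall>t. t0 \<le> t \<and> t < tm \<longrightarrow> xm (t + 1) - xm t = -1) \<and>
        (\<forall>t. tm \<le> t \<and> t < t1 \<longrightarrow> xm (t + 1) - xm t = 1) \<and>
        S = {(t, x). t0 \<le> t \<and> t \<le> t1 \<and> xm t \<le> x \<and> x \<le> xp t \<and> even (t + x)})"

definition incoming_asc :: "point set \<Rightarrow> edge set" where
  "incoming_asc S = {((t - 1, x - 1), (t, x)) | t x. (t, x) \<in> S \<and> (t - 1, x - 1) \<notin> S}"

definition incoming_desc :: "point set \<Rightarrow> edge set" where
  "incoming_desc S = {((t - 1, x + 1), (t, x)) | t x. (t, x) \<in> S \<and> (t - 1, x + 1) \<notin> S}"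

definition outgoing_asc :: "point set \<Rightarrow> edge set" where
  "outgoing_asc S = {((t, x), (t + 1, x + 1)) | t x. (t, x) \<in> S \<and> (t + 1, x + 1) \<notin> S}"

definition outgoing_desc :: "point set \<Rightarrow> edge set" where
  "outgoing_desc S = {((t, x), (t + 1, x - 1)) | t x. (t, x) \<in> S \<and> (t + 1, x - 1) \<notin> S}"

definition incoming :: "point set \<Rightarrow> edge set" where
  "incoming S = incoming_asc S \<union> incoming_desc S"

definition outgoing :: "point set \<Rightarrow> edge set" where
  "outgoing S = outgoing_asc S \<union> outgoing_desc S"

text \<open>The natural
  number argument is a recursion depth (fuel); an edge whose lower endpoint is not in S is
  an incoming edge and takes the input value.\<close>

fun flow_gen :: "point set \<Rightarrow> (edge \<Rightarrow> real) \<Rightarrow> (point \<Rightarrow> real) \<Rightarrow> nat \<Rightarrow> edge \<Rightarrow> real" where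
  "flow_gen S inp xi 0 e = inp e"
| "flow_gen S inp xi (Suc n) e =
     (let (t, x) = fst e in
      if (t, x) \<in> S then
        (let zp = flow_gen S inp xi n ((t - 1, x - 1), (t, x));
             zm = flow_gen S inp xi n ((t - 1, x + 1), (t, x))
         in if snd e = (t + 1, x + 1) then xi (t, x) + max 0 (zp - zm)
            else if snd e = (t + 1, x - 1) then xi (t, x) + max 0 (zm - zp)
            else 0)
      else inp e)"

text \<open>Since every descending chain of points of S has length at most card S, recursion
  depth card S suffices for a finite domain S.\<close>

definition flow_field :: "point set \<Rightarrow> (edge \<Rightarrow> real) \<Rightarrow> (point \<Rightarrow> real) \<Rightarrow> edge \<Rightarrow> real" where
  "flow_field S inp xi = flow_gen S inp xi (card S)"

definition Rmap :: "real \<times> real \<times> real \<Rightarrow> real \<times> real \<times> real" where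
  "Rmap = (\<lambda>(r, s, t). (t + max 0 (r - s), t + max 0 (s - r), min r s))"

end

theory Submission
  imports Defs
begin

(* Process the points of the domain S
   one at a time, in an order compatible with time: after a down-closed set P of points
   has been processed, the current state consists of the flow values on the edges of the
   front of P (edges entering the unprocessed part of S) together with the births at the
   unprocessed points.  The invariant is that these random variables are independent,
   ascending front edges having law pi1 and descending ones law pi2.  Processing one more
   point (t,x) replaces the two front edges entering it and its birth by the two edges
   leaving it; the new pair is Rmap applied to the old triple, so by the invariance of
   pi1 x pi2 x pi3 under Rmap it has law pi1 x pi2, and as it is a function of a block of
   variables independent of the rest, the invariant survives.  For P = {} the front is the
   set of incoming edges, for P = S the set of outgoing edges. *)

lemma Rmap_measurable [measurable]:
  "Rmap \<in> borel \<Otimes>\<^sub>M (borel \<Otimes>\<^sub>M borel) \<rightarrow>\<^sub>M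
           (borel::real measure) \<Otimes>\<^sub>M ((borel::real measure) \<Otimes>\<^sub>M (borel::real measure))"
  unfolding Rmap_def by measurable

lemma Rmap_output_law:
  fixes \<pi>1 \<pi>2 \<pi>3 :: "real measure"
  assumes "prob_space \<pi>2" "prob_space \<pi>3"
    and "sets \<pi>1 = sets borel" "sets \<pi>2 = sets borel" "sets \<pi>3 = sets borel"
    and invariant: "distr (\<pi>1 \<Otimes>\<^sub>M (\<pi>2 \<Otimes>\<^sub>M \<pi>3)) (\<pi>1 \<Otimes>\<^sub>M (\<pi>2 \<Otimes>\<^sub>M \<pi>3)) Rmap
                      = \<pi>1 \<Otimes>\<^sub>M (\<pi>2 \<Otimes>\<^sub>M \<pi>3)"
  shows "distr (\<pi>1 \<Otimes>\<^sub>M (\<pi>2 \<Otimes>\<^sub>M \<pi>3)) (borel \<Otimes>\<^sub>M borel)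
           (\<lambda>w. (fst (Rmap w), fst (snd (Rmap w)))) = \<pi>1 \<Otimes>\<^sub>M \<pi>2"
proof -
  let ?\<mu> = "\<pi>1 \<Otimes>\<^sub>M (\<pi>2 \<Otimes>\<^sub>M \<pi>3)"
  let ?drop3 = "\<lambda>(r, u). (r, fst u) :: real \<times> real"
  interpret P3: prob_space \<pi>3 by fact
  have sets_\<mu>: "sets ?\<mu> = sets (borel \<Otimes>\<^sub>M (borel \<Otimes>\<^sub>M borel))"
    using assms(3-5) by (intro sets_pair_measure_cong) auto
  have sets_12: "sets (\<pi>1 \<Otimes>\<^sub>M \<pi>2) = sets (borel \<Otimes>\<^sub>M borel)"
    using assms(3,4) by (intro sets_pair_measure_cong) auto
  have drop3: "?drop3 \<in> ?\<mu> \<rightarrow>\<^sub>M \<pi>1 \<Otimes>\<^sub>M \<pi>2"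
    by (simp add: measurable_cong_sets[OF sets_\<mu> sets_12])
  have "distr ?\<mu> (borel \<Otimes>\<^sub>M borel) (\<lambda>w. (fst (Rmap w), fst (snd (Rmap w))))
      = distr (distr ?\<mu> ?\<mu> Rmap) (\<pi>1 \<Otimes>\<^sub>M \<pi>2) ?drop3"
    using drop3 by (subst distr_distr)
      (auto simp: measurable_cong_sets[OF sets_\<mu> sets_\<mu>] comp_def case_prod_beta
            intro!: distr_cong sets_12[symmetric])
  also have "\<dots> = distr \<pi>1 \<pi>1 (\<lambda>r. r) \<Otimes>\<^sub>M distr (\<pi>2 \<Otimes>\<^sub>M \<pi>3) \<pi>2 fst"
    unfolding invariant
    by (subst pair_measure_distr)
      (auto simp: P3.distr_pair_fst assms(1) prob_space_imp_sigma_finite)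
  also have "\<dots> = \<pi>1 \<Otimes>\<^sub>M \<pi>2"
    by (simp add: P3.distr_pair_fst)
  finally show ?thesis .
qed

lemma distr_pair_snd_prob:
  assumes "prob_space N" "sigma_finite_measure K"
  shows "distr (N \<Otimes>\<^sub>M K) K snd = K"
proof (rule measure_eqI)
  interpret N: prob_space N by fact
  interpret K: sigma_finite_measure K by fact
  fix A assume "A \<in> sets (distr (N \<Otimes>\<^sub>M K) K snd)"
  then have A: "A \<in> sets K" by simp
  have "snd -` A \<inter> space (N \<Otimes>\<^sub>M K) = space N \<times> A"
    using sets.sets_into_space[OF A] by (auto simp: space_pair_measure)
  then have "emeasure (distr (N \<Otimes>\<^sub>M K) K snd) A = emeasure (N \<Otimes>\<^sub>M K) (space N \<times> A)"
    using A by (simp add: emeasure_distr)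
  also have "\<dots> = emeasure K A"
    using A by (simp add: K.emeasure_pair_measure_Times N.emeasure_space_1)
  finally show "emeasure (distr (N \<Otimes>\<^sub>M K) K snd) A = emeasure K A" .
qed simp

context prob_space
begin

lemma indep_vars_reindex:
  assumes "inj_on h J" and "indep_vars M' X (h ` J)"
  shows "indep_vars (\<lambda>j. M' (h j)) (\<lambda>j. X (h j)) J"
proof -
  have "indep_sets (\<lambda>j. sigma_sets (space M) {X (h j) -` A \<inter> space M | A. A \<in> sets (M' (h j))}) J"
    unfolding indep_sets_def
  proof (intro conjI ballI allI impI)
    fix j assume "j \<in> J"
    then show "sigma_sets (space M) {X (h j) -` A \<inter> space M | A. A \<in> sets (M' (h j))} \<subseteq> events"
      using assms(2) unfolding indep_vars_def indep_sets_def by auto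
  next
    fix K A assume K: "K \<subseteq> J" "K \<noteq> {}" "finite K"
      and A: "A \<in> (\<Pi> j\<in>K. sigma_sets (space M) {X (h j) -` A \<inter> space M | A. A \<in> sets (M' (h j))})"
    have inj: "inj_on h K" using assms(1) K(1) by (rule inj_on_subset)
    define A' where "A' = (\<lambda>i. A (the_inv_into K h i))"
    have A'h: "A' (h k) = A k" if "k \<in> K" for k
      using inj that by (simp add: A'_def the_inv_into_f_f)
    have "indep_sets (\<lambda>i. sigma_sets (space M) {X i -` A \<inter> space M | A. A \<in> sets (M' i)}) (h ` J)"
      using assms(2) unfolding indep_vars_def by blast
    moreover have "A' \<in> (\<Pi> i\<in>h ` K. sigma_sets (space M) {X i -` A \<inter> space M | A. A \<in> sets (M' i)})"
      using A A'h by auto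
    ultimately have "prob (\<Inter>i\<in>h ` K. A' i) = (\<Prod>i\<in>h ` K. prob (A' i))"
      using K by (intro indep_setsD) auto
    then show "prob (\<Inter>k\<in>K. A k) = (\<Prod>k\<in>K. prob (A k))"
      using A'h by (simp add: prod.reindex[OF inj] image_image cong: INF_cong)
  qed
  then show ?thesis
    using assms(2) unfolding indep_vars_def by auto
qed

(* The product formula for independent variables, including the empty intersection
   (which is the whole space). *)

lemma indep_vars_prob_Inter:
  assumes "indep_vars M' X I" "finite I" "\<And>i. i \<in> I \<Longrightarrow> A i \<in> sets (M' i)"
  shows "prob (space M \<inter> (\<Inter>i\<in>I. X i -` A i)) = (\<Prod>i\<in>I. prob (X i -` A i \<inter> space M))"
proof (cases "I = {}")
  case True
  then show ?thesis by (simp add: prob_space)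
next
  case False
  have "space M \<inter> (\<Inter>i\<in>I. X i -` A i) = (\<Inter>i\<in>I. X i -` A i \<inter> space M)"
    using False by auto
  also have "prob \<dots> = (\<Prod>i\<in>I. prob (X i -` A i \<inter> space M))"
    using False assms by (intro indep_varsD_finite)
  finally show ?thesis .
qed

lemma indep_vars_join_blocks:
  fixes W :: "'i \<Rightarrow> 'a \<Rightarrow> 'b"
  assumes UV: "indep_var MU U MV V"
    and KL: "finite K" "finite L" "K \<inter> L = {}"
    and f: "\<And>k. k \<in> K \<Longrightarrow> f k \<in> MU \<rightarrow>\<^sub>M M' k" "\<And>k \<omega>. k \<in> K \<Longrightarrow> W k \<omega> = f k (U \<omega>)"
    and g: "\<And>l. l \<in> L \<Longrightarrow> g l \<in> MV \<rightarrow>\<^sub>M M' l" "\<And>l \<omega>. l \<in> L \<Longrightarrow> W l \<omega> = g l (V \<omega>)"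
    and indep_K: "indep_vars M' W K" and indep_L: "indep_vars M' W L"
  shows "indep_vars M' W (K \<union> L)"
proof (cases "K \<union> L = {}")
  case True
  then show ?thesis by (simp add: indep_vars_def indep_sets_def)
next
  case False
  have rv: "random_variable (M' i) (W i)" if "i \<in> K \<union> L" for i
    using that indep_K indep_L unfolding indep_vars_def by auto
  have product: "\<forall>A\<in>(\<Pi> i\<in>K \<union> L. sets (M' i)).
      prob (\<Inter>i\<in>K \<union> L. W i -` A i \<inter> space M) = (\<Prod>i\<in>K \<union> L. prob (W i -` A i \<inter> space M))"
  proof
    fix A assume A: "A \<in> (\<Pi> i\<in>K \<union> L. sets (M' i))"
    define G where "G = {u \<in> space MU. \<forall>k\<in>K. f k u \<in> A k}"
    define H where "H = {v \<in> space MV. \<forall>l\<in>L. g l v \<in> A l}"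
    have G: "G \<in> sets MU"
      unfolding G_def using A f(1) KL(1) by (measurable; auto intro: pred_sets2)
    have H: "H \<in> sets MV"
      unfolding H_def using A g(1) KL(2) by (measurable; auto intro: pred_sets2)
    have U_space: "U \<omega> \<in> space MU" and V_space: "V \<omega> \<in> space MV" if "\<omega> \<in> space M" for \<omega>
      using that measurable_space[OF indep_var_rv1[OF UV]] measurable_space[OF indep_var_rv2[OF UV]]
      by auto
    have event: "(\<Inter>i\<in>K \<union> L. W i -` A i \<inter> space M) = (\<lambda>x. (U x, V x)) -` (G \<times> H) \<inter> space M"
      using False U_space V_space by (auto simp: G_def H_def f(2) g(2); metis UnCI f(2) g(2))
    have event_K: "U -` G \<inter> space M = space M \<inter> (\<Inter>k\<in>K. W k -` A k)"
      using U_space f(2) by (auto simp: G_def)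
    have event_L: "V -` H \<inter> space M = space M \<inter> (\<Inter>l\<in>L. W l -` A l)"
      using V_space g(2) by (auto simp: H_def)
    have "prob (\<Inter>i\<in>K \<union> L. W i -` A i \<inter> space M) = prob (U -` G \<inter> space M) * prob (V -` H \<inter> space M)"
      unfolding event using UV G H by (rule indep_varD)
    also have "\<dots> = (\<Prod>i\<in>K. prob (W i -` A i \<inter> space M)) * (\<Prod>i\<in>L. prob (W i -` A i \<inter> space M))"
      unfolding event_K event_L
      by (simp add: indep_vars_prob_Inter[OF indep_K KL(1), of A] indep_vars_prob_Inter[OF indep_L KL(2), of A]
          A[unfolded Pi_iff])
    also have "\<dots> = (\<Prod>i\<in>K \<union> L. prob (W i -` A i \<inter> space M))"
      using KL by (simp add: prod.union_disjoint)
    finally show "prob (\<Inter>i\<in>K \<union> L. W i -` A i \<inter> space M) = (\<Prod>i\<in>K \<union> L. prob (W i -` A i \<inter> space M))" .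
  qed
  show ?thesis
    by (rule iffD2[OF indep_vars_finite[where E="\<lambda>i. sets (M' i)"] product])
      (use False KL rv in \<open>auto simp: sets.sigma_sets_eq dest: sets.sets_into_space intro: sets.Int_stable\<close>)
qed

lemma indep_var_imp_indep_vars_pair:
  assumes "indep_var N X N Y" "a \<noteq> b" "W a = X" "W b = Y"
  shows "indep_vars (\<lambda>_. N) W {a, b}"
proof -
  define h where "h = (\<lambda>i. i = a)"
  have "case_bool N N = (\<lambda>_. N)"
    by (rule ext) (simp split: bool.split)
  moreover have "h ` {a, b} = UNIV"
    using assms(2) by (auto simp: h_def)
  ultimately have indep_bool: "indep_vars (\<lambda>_. N) (case_bool X Y) (h ` {a, b})"
    using assms(1) unfolding indep_var_def by simp
  have "inj_on h {a, b}"
    using assms(2) by (auto simp: h_def inj_on_def)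
  from indep_vars_reindex[OF this indep_bool]
  have "indep_vars (\<lambda>_. N) (\<lambda>i. case_bool X Y (h i)) {a, b}" .
  moreover have "indep_vars (\<lambda>_. N) W {a, b} \<longleftrightarrow> indep_vars (\<lambda>_. N) (\<lambda>i. case_bool X Y (h i)) {a, b}"
    using assms(2-4) by (intro indep_vars_cong) (auto simp: h_def)
  ultimately show ?thesis
    by simp
qed

lemma indep_vars_triple_law:
  fixes Z :: "'i \<Rightarrow> 'a \<Rightarrow> 'b"
  assumes indep: "indep_vars (\<lambda>_. N) Z I" and abc: "a \<in> I" "b \<in> I" "c \<in> I" "a \<noteq> b" "a \<noteq> c" "b \<noteq> c"
  shows "distr M (N \<Otimes>\<^sub>M (N \<Otimes>\<^sub>M N)) (\<lambda>\<omega>. (Z a \<omega>, (Z b \<omega>, Z c \<omega>)))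
       = distr M N (Z a) \<Otimes>\<^sub>M (distr M N (Z b) \<Otimes>\<^sub>M distr M N (Z c))"
proof -
  let ?Ua = "\<lambda>\<omega>. restrict (\<lambda>i. Z i \<omega>) {a}" and ?Ubc = "\<lambda>\<omega>. restrict (\<lambda>i. Z i \<omega>) {b, c}"
  let ?A = "PiM {a} (\<lambda>_. N)" and ?BC = "PiM {b, c} (\<lambda>_. N)"
  have "indep_var N ((\<lambda>v. v b) \<circ> (\<lambda>\<omega>. restrict (\<lambda>i. Z i \<omega>) {b}))
                  N ((\<lambda>v. v c) \<circ> (\<lambda>\<omega>. restrict (\<lambda>i. Z i \<omega>) {c}))"
    using abc by (intro indep_var_compose[OF indep_var_restrict[OF indep]]) auto
  then have bc: "indep_var N (Z b) N (Z c)"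
    by (simp add: comp_def)
  have a_bc: "indep_var ?A ?Ua ?BC ?Ubc"
    using abc by (intro indep_var_restrict[OF indep]) auto
  have Ua: "?Ua \<in> M \<rightarrow>\<^sub>M ?A" and Ubc: "?Ubc \<in> M \<rightarrow>\<^sub>M ?BC"
    using a_bc by (blast dest: indep_var_rv1 indep_var_rv2)+
  have pick_a: "(\<lambda>v. v a) \<in> distr M ?A ?Ua \<rightarrow>\<^sub>M N"
    by (simp cong: measurable_cong_sets)
  have pick_bc: "(\<lambda>v. (v b, v c)) \<in> distr M ?BC ?Ubc \<rightarrow>\<^sub>M N \<Otimes>\<^sub>M N"
    by (simp cong: measurable_cong_sets)
  have sf: "sigma_finite_measure (distr (distr M ?BC ?Ubc) (N \<Otimes>\<^sub>M N) (\<lambda>v. (v b, v c)))"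
    using Ubc by (intro prob_space_imp_sigma_finite prob_space.prob_space_distr prob_space_distr)
      (simp_all cong: measurable_cong_sets)
  have "distr M (N \<Otimes>\<^sub>M (N \<Otimes>\<^sub>M N)) (\<lambda>\<omega>. (Z a \<omega>, (Z b \<omega>, Z c \<omega>)))
      = distr (distr M (?A \<Otimes>\<^sub>M ?BC) (\<lambda>\<omega>. (?Ua \<omega>, ?Ubc \<omega>))) (N \<Otimes>\<^sub>M (N \<Otimes>\<^sub>M N))
          (\<lambda>(x, y). (x a, (y b, y c)))"
    using Ua Ubc by (subst distr_distr) (auto simp: comp_def)
  also have "\<dots> = distr (distr M ?A ?Ua \<Otimes>\<^sub>M distr M ?BC ?Ubc) (N \<Otimes>\<^sub>M (N \<Otimes>\<^sub>M N))
          (\<lambda>(x, y). (x a, (y b, y c)))"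
    using a_bc unfolding indep_var_distribution_eq by simp
  also have "\<dots> = distr (distr M ?A ?Ua) N (\<lambda>v. v a) \<Otimes>\<^sub>M
                   distr (distr M ?BC ?Ubc) (N \<Otimes>\<^sub>M N) (\<lambda>v. (v b, v c))"
    by (subst pair_measure_distr[OF pick_a pick_bc sf]) simp
  also have "\<dots> = distr M N (Z a) \<Otimes>\<^sub>M distr M (N \<Otimes>\<^sub>M N) (\<lambda>\<omega>. (Z b \<omega>, Z c \<omega>))"
    using Ua Ubc by (simp add: distr_distr comp_def)
  also have "\<dots> = distr M N (Z a) \<Otimes>\<^sub>M (distr M N (Z b) \<Otimes>\<^sub>M distr M N (Z c))"
    using bc unfolding indep_var_distribution_eq by simp
  finally show ?thesis .
qed


lemma indep_var_of_product_law:
  fixes X Y :: "'a \<Rightarrow> 'b"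
  assumes \<pi>: "prob_space \<pi>1" "prob_space \<pi>2" "sets \<pi>1 = sets N" "sets \<pi>2 = sets N"
    and rv: "X \<in> M \<rightarrow>\<^sub>M N" "Y \<in> M \<rightarrow>\<^sub>M N"
    and joint: "distr M (N \<Otimes>\<^sub>M N) (\<lambda>\<omega>. (X \<omega>, Y \<omega>)) = \<pi>1 \<Otimes>\<^sub>M \<pi>2"
  shows "distr M N X = \<pi>1" and "distr M N Y = \<pi>2" and "indep_var N X N Y"
proof -
  interpret P2: prob_space \<pi>2 by fact
  have pair: "(\<lambda>\<omega>. (X \<omega>, Y \<omega>)) \<in> M \<rightarrow>\<^sub>M N \<Otimes>\<^sub>M N"
    using rv by measurable
  have "distr M N X = distr (distr M (N \<Otimes>\<^sub>M N) (\<lambda>\<omega>. (X \<omega>, Y \<omega>))) \<pi>1 fst"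
    using pair \<pi>(3) by (subst distr_distr) (auto simp: comp_def intro!: distr_cong cong: measurable_cong_sets)
  then show law_X: "distr M N X = \<pi>1"
    unfolding joint P2.distr_pair_fst .
  have "distr M N Y = distr (distr M (N \<Otimes>\<^sub>M N) (\<lambda>\<omega>. (X \<omega>, Y \<omega>))) \<pi>2 snd"
    using pair \<pi>(4) by (subst distr_distr) (auto simp: comp_def intro!: distr_cong cong: measurable_cong_sets)
  then show law_Y: "distr M N Y = \<pi>2"
    unfolding joint using distr_pair_snd_prob[OF \<pi>(1) prob_space_imp_sigma_finite[OF \<pi>(2)]] by simp
  show "indep_var N X N Y"
    unfolding indep_var_distribution_eq using rv law_X law_Y joint by simp
qed

lemma Rmap_outputs_law:
  fixes Z :: "'i \<Rightarrow> 'a \<Rightarrow> real"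
  assumes \<pi>: "prob_space \<pi>2" "prob_space \<pi>3"
      "sets \<pi>1 = sets borel" "sets \<pi>2 = sets borel" "sets \<pi>3 = sets borel"
    and invariant: "distr (\<pi>1 \<Otimes>\<^sub>M (\<pi>2 \<Otimes>\<^sub>M \<pi>3)) (\<pi>1 \<Otimes>\<^sub>M (\<pi>2 \<Otimes>\<^sub>M \<pi>3)) Rmap
                      = \<pi>1 \<Otimes>\<^sub>M (\<pi>2 \<Otimes>\<^sub>M \<pi>3)"
    and indep: "indep_vars (\<lambda>_. borel) Z I"
    and abc: "a \<in> I" "b \<in> I" "c \<in> I" "a \<noteq> b" "a \<noteq> c" "b \<noteq> c"
    and laws: "distr M borel (Z a) = \<pi>1" "distr M borel (Z b) = \<pi>2" "distr M borel (Z c) = \<pi>3"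
  shows "distr M (borel \<Otimes>\<^sub>M borel)
           (\<lambda>\<omega>. (Z c \<omega> + max 0 (Z a \<omega> - Z b \<omega>), Z c \<omega> + max 0 (Z b \<omega> - Z a \<omega>))) = \<pi>1 \<Otimes>\<^sub>M \<pi>2"
proof -
  let ?B3 = "borel \<Otimes>\<^sub>M (borel \<Otimes>\<^sub>M borel) :: (real \<times> real \<times> real) measure"
  let ?W = "\<lambda>\<omega>. (Z a \<omega>, (Z b \<omega>, Z c \<omega>))"
  let ?out = "\<lambda>w. (fst (Rmap w), fst (snd (Rmap w)))"
  have rv: "random_variable borel (Z i)" if "i \<in> I" for i
    using indep that unfolding indep_vars_def by auto
  have "?W \<in> M \<rightarrow>\<^sub>M ?B3"
    using rv abc by measurable
  then have "distr M (borel \<Otimes>\<^sub>M borel) (?out \<circ> ?W) = distr (distr M ?B3 ?W) (borel \<Otimes>\<^sub>M borel) ?out"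
    by (subst distr_distr) auto
  also have "distr M ?B3 ?W = \<pi>1 \<Otimes>\<^sub>M (\<pi>2 \<Otimes>\<^sub>M \<pi>3)"
    using indep_vars_triple_law[OF indep abc] laws by simp
  also have "distr (\<pi>1 \<Otimes>\<^sub>M (\<pi>2 \<Otimes>\<^sub>M \<pi>3)) (borel \<Otimes>\<^sub>M borel) ?out = \<pi>1 \<Otimes>\<^sub>M \<pi>2"
    using Rmap_output_law[OF \<pi> invariant] .
  also have "?out \<circ> ?W = (\<lambda>\<omega>. (Z c \<omega> + max 0 (Z a \<omega> - Z b \<omega>), Z c \<omega> + max 0 (Z b \<omega> - Z a \<omega>)))"
    by (auto simp: Rmap_def)
  finally show ?thesis .
qed

(* The outputs are functions of the block {a, b, c},
   which is independent of the remaining variables. *)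

lemma burke_step:
  fixes Z Z' :: "'i \<Rightarrow> 'a \<Rightarrow> real"
  assumes \<pi>: "prob_space \<pi>1" "prob_space \<pi>2" "prob_space \<pi>3"
      "sets \<pi>1 = sets borel" "sets \<pi>2 = sets borel" "sets \<pi>3 = sets borel"
    and invariant: "distr (\<pi>1 \<Otimes>\<^sub>M (\<pi>2 \<Otimes>\<^sub>M \<pi>3)) (\<pi>1 \<Otimes>\<^sub>M (\<pi>2 \<Otimes>\<^sub>M \<pi>3)) Rmap
                      = \<pi>1 \<Otimes>\<^sub>M (\<pi>2 \<Otimes>\<^sub>M \<pi>3)"
    and indep: "indep_vars (\<lambda>_. borel) Z I" and fin: "finite I"
    and abc: "a \<in> I" "b \<in> I" "c \<in> I" "a \<noteq> b" "a \<noteq> c" "b \<noteq> c"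
    and laws: "distr M borel (Z a) = \<pi>1" "distr M borel (Z b) = \<pi>2" "distr M borel (Z c) = \<pi>3"
    and fresh: "a' \<notin> I - {a, b, c}" "b' \<notin> I - {a, b, c}" "a' \<noteq> b'"
    and unchanged: "\<And>i. i \<in> I - {a, b, c} \<Longrightarrow> Z' i = Z i"
    and out_a: "Z' a' = (\<lambda>\<omega>. Z c \<omega> + max 0 (Z a \<omega> - Z b \<omega>))"
    and out_b: "Z' b' = (\<lambda>\<omega>. Z c \<omega> + max 0 (Z b \<omega> - Z a \<omega>))"
  shows "indep_vars (\<lambda>_. borel) Z' ({a', b'} \<union> (I - {a, b, c}))"
    and "distr M borel (Z' a') = \<pi>1" and "distr M borel (Z' b') = \<pi>2"
proof -
  have rv: "random_variable borel (Z i)" if "i \<in> I" for i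
    using indep that unfolding indep_vars_def by auto
  have rv_outputs: "Z' a' \<in> borel_measurable M" "Z' b' \<in> borel_measurable M"
    unfolding out_a out_b using rv abc by measurable
  have joint: "distr M (borel \<Otimes>\<^sub>M borel) (\<lambda>\<omega>. (Z' a' \<omega>, Z' b' \<omega>)) = \<pi>1 \<Otimes>\<^sub>M \<pi>2"
    using Rmap_outputs_law[OF \<pi>(2-6) invariant indep abc laws] by (simp add: out_a out_b)
  note outputs = indep_var_of_product_law[OF \<pi>(1,2,4,5) rv_outputs joint]
  show "distr M borel (Z' a') = \<pi>1" by (fact outputs(1))
  show "distr M borel (Z' b') = \<pi>2" by (fact outputs(2))
  define f where "f = (\<lambda>k (v::'i \<Rightarrow> real).
    if k = a' then v c + max 0 (v a - v b) else v c + max 0 (v b - v a))"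
  have blocks: "indep_var (PiM {a, b, c} (\<lambda>_. borel)) (\<lambda>\<omega>. restrict (\<lambda>i. Z i \<omega>) {a, b, c})
                          (PiM (I - {a, b, c}) (\<lambda>_. borel)) (\<lambda>\<omega>. restrict (\<lambda>i. Z i \<omega>) (I - {a, b, c}))"
    using abc by (intro indep_var_restrict[OF indep]) auto
  have indep_outputs: "indep_vars (\<lambda>_. borel) Z' {a', b'}"
    by (rule indep_var_imp_indep_vars_pair[OF outputs(3) fresh(3) refl refl])
  have indep_rest: "indep_vars (\<lambda>_. borel) Z' (I - {a, b, c})"
    using indep_vars_subset[OF indep, of "I - {a, b, c}"]
    by (subst indep_vars_cong[OF refl unchanged refl]) auto
  show "indep_vars (\<lambda>_. borel) Z' ({a', b'} \<union> (I - {a, b, c}))"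
  proof (rule indep_vars_join_blocks[OF blocks _ _ _ _ _ _ _ indep_outputs indep_rest])
    show "f k \<in> PiM {a, b, c} (\<lambda>_. borel) \<rightarrow>\<^sub>M borel" for k
      unfolding f_def by measurable
    show "Z' k \<omega> = f k (restrict (\<lambda>i. Z i \<omega>) {a, b, c})" if "k \<in> {a', b'}" for k \<omega>
      using that fresh(3) by (auto simp: f_def out_a out_b)
    show "(\<lambda>v. v l) \<in> PiM (I - {a, b, c}) (\<lambda>_. borel) \<rightarrow>\<^sub>M borel" if "l \<in> I - {a, b, c}" for l
      using that by measurable
    show "Z' l \<omega> = restrict (\<lambda>i. Z i \<omega>) (I - {a, b, c}) l" if "l \<in> I - {a, b, c}" for l \<omega>
      using that unchanged by simp
  qed (use fin fresh in auto)
qed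


end

(* A hexagonal domain is finite and spans fewer than card S time steps, so the fuel card S
   used by flow_field suffices; this yields the defining recursion of the flow. *)

lemma hexagonal_domain_time_bounds:
  assumes "hexagonal_domain S"
  shows "finite S"
    and "\<exists>t0 t1. (\<forall>p\<in>S. t0 \<le> fst p \<and> fst p \<le> t1) \<and> t1 - t0 < int (card S)"
proof -
  obtain t0 t1 xm xp where t: "t0 < t1"
    and x: "\<forall>t. t0 \<le> t \<and> t \<le> t1 \<longrightarrow> xm t \<le> xp t \<and> even (t + xm t)"
    and S: "S = {(t, x). t0 \<le> t \<and> t \<le> t1 \<and> xm t \<le> x \<and> x \<le> xp t \<and> even (t + x)}"
    using assms unfolding hexagonal_domain_def by blast
  have "S \<subseteq> (\<Union>t\<in>{t0..t1}. {t} \<times> {xm t..xp t})"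
    using S by auto
  then show fin: "finite S"
    by (rule finite_subset) auto
  have "(\<lambda>t. (t, xm t)) ` {t0..t1} \<subseteq> S"
    using x S by auto
  then have "card {t0..t1} \<le> card S"
    using fin by (intro card_inj_on_le[of "\<lambda>t. (t, xm t)"]) (auto simp: inj_on_def)
  then have "t1 - t0 < int (card S)"
    using t by simp
  moreover have "\<forall>p\<in>S. t0 \<le> fst p \<and> fst p \<le> t1"
    using S by auto
  ultimately show "\<exists>t0 t1. (\<forall>p\<in>S. t0 \<le> fst p \<and> fst p \<le> t1) \<and> t1 - t0 < int (card S)"
    by blast
qed

lemma flow_gen_enough_fuel:
  assumes "\<forall>p\<in>S. t0 \<le> fst p" and "fst (fst e) - t0 < int n"
  shows "flow_gen S inp xi (Suc n) e = flow_gen S inp xi n e"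
  using assms(2)
proof (induction n arbitrary: e)
  case 0
  obtain t x v where e: "e = ((t, x), v)" by (metis prod.collapse)
  have "(t, x) \<notin> S" using 0 assms(1) e by force
  then show ?case by (simp add: e)
next
  case (Suc n)
  obtain t x v where e: "e = ((t, x), v)" by (metis prod.collapse)
  have "flow_gen S inp xi (Suc n) ((t - 1, x + d), (t, x)) = flow_gen S inp xi n ((t - 1, x + d), (t, x))"
    for d using Suc e by (intro Suc.IH) auto
  from this[of "-1"] this[of 1] show ?case
    unfolding e by (simp only: flow_gen.simps(2) fst_conv prod.case Let_def diff_conv_add_uminus)
qed

lemma flow_field_incoming:
  assumes "fst e \<notin> S"
  shows "flow_field S inp xi e = inp e"
proof (cases "card S")
  case (Suc k)
  obtain y v where "e = (y, v)" by (cases e)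
  then show ?thesis using assms by (cases y) (simp add: flow_field_def Suc)
qed (simp add: flow_field_def)

lemma flow_field_recursion:
  assumes "hexagonal_domain S" "(t, x) \<in> S"
  shows "flow_field S inp xi ((t, x), (t + 1, x + 1)) = xi (t, x) +
           max 0 (flow_field S inp xi ((t - 1, x - 1), (t, x)) - flow_field S inp xi ((t - 1, x + 1), (t, x)))"
    and "flow_field S inp xi ((t, x), (t + 1, x - 1)) = xi (t, x) +
           max 0 (flow_field S inp xi ((t - 1, x + 1), (t, x)) - flow_field S inp xi ((t - 1, x - 1), (t, x)))"
proof -
  obtain t0 t1 where bounds: "\<forall>p\<in>S. t0 \<le> fst p \<and> fst p \<le> t1" "t1 - t0 < int (card S)"
    using hexagonal_domain_time_bounds[OF assms(1)] by blast
  obtain k where k: "card S = Suc k"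
    using hexagonal_domain_time_bounds(1)[OF assms(1)] assms(2) by (cases "card S") auto
  have "flow_gen S inp xi (Suc k) ((t - 1, x + d), (t, x)) = flow_gen S inp xi k ((t - 1, x + d), (t, x))"
    for d using bounds assms(2) k by (intro flow_gen_enough_fuel[of S t0]) auto
  from this[of "-1"] this[of 1] assms(2)
  show "flow_field S inp xi ((t, x), (t + 1, x + 1)) = xi (t, x) +
           max 0 (flow_field S inp xi ((t - 1, x - 1), (t, x)) - flow_field S inp xi ((t - 1, x + 1), (t, x)))"
    and "flow_field S inp xi ((t, x), (t + 1, x - 1)) = xi (t, x) +
           max 0 (flow_field S inp xi ((t - 1, x + 1), (t, x)) - flow_field S inp xi ((t - 1, x - 1), (t, x)))"
    unfolding flow_field_def k by simp_all
qed

definition ascending :: "edge \<Rightarrow> bool" where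
  "ascending e \<longleftrightarrow> snd e = (fst (fst e) + 1, snd (fst e) + 1)"

definition down_closed :: "point set \<Rightarrow> point set \<Rightarrow> bool" where
  "down_closed S P \<longleftrightarrow> P \<subseteq> S \<and>
     (\<forall>t x. (t, x) \<in> P \<longrightarrow> ((t - 1, x - 1) \<in> S \<longrightarrow> (t - 1, x - 1) \<in> P)
                         \<and> ((t - 1, x + 1) \<in> S \<longrightarrow> (t - 1, x + 1) \<in> P))"

definition front :: "point set \<Rightarrow> point set \<Rightarrow> edge set" where
  "front S P = {(u, v). (v = (fst u + 1, snd u + 1) \<or> v = (fst u + 1, snd u - 1)) \<and>
      ((u \<notin> S \<and> v \<in> S \<and> v \<notin> P) \<or> (u \<in> P \<and> v \<notin> P))}"

lemma front_empty: "front S {} = incoming S"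
  unfolding front_def incoming_def incoming_asc_def incoming_desc_def by (auto; force)

lemma front_full: "front S S = outgoing S"
  unfolding front_def outgoing_def outgoing_asc_def outgoing_desc_def by (auto; force)

lemma front_finite:
  assumes "finite S" "P \<subseteq> S"
  shows "finite (front S P)"
proof -
  have "front S P \<subseteq> (\<lambda>u. (u, (fst u + 1, snd u + 1))) ` S \<union> (\<lambda>u. (u, (fst u + 1, snd u - 1))) ` S
     \<union> (\<lambda>v. ((fst v - 1, snd v - 1), v)) ` S \<union> (\<lambda>v. ((fst v - 1, snd v + 1), v)) ` S"
    using assms(2) unfolding front_def by (auto simp: image_iff)
  then show ?thesis
    by (rule finite_subset) (simp add: assms(1))
qed

lemma front_insert:
  assumes "P \<subseteq> S" "(t, x) \<in> S" "(t, x) \<notin> P"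
    and below: "{(t - 1, x - 1), (t - 1, x + 1)} \<inter> S \<subseteq> P"
    and above: "{(t + 1, x + 1), (t + 1, x - 1)} \<inter> P = {}"
  shows "((t - 1, x - 1), (t, x)) \<in> front S P" "((t - 1, x + 1), (t, x)) \<in> front S P"
    and "((t, x), (t + 1, x + 1)) \<notin> front S P" "((t, x), (t + 1, x - 1)) \<notin> front S P"
    and "front S (insert (t, x) P) = front S P - {((t - 1, x - 1), (t, x)), ((t - 1, x + 1), (t, x))}
           \<union> {((t, x), (t + 1, x + 1)), ((t, x), (t + 1, x - 1))}"
  using assms unfolding front_def by (auto; force)+

lemma down_closed_remove_top:
  assumes "down_closed S P" "finite P" "P \<noteq> {}"
  obtains t x where "(t, x) \<in> P" "down_closed S (P - {(t, x)})"
    and "{(t - 1, x - 1), (t - 1, x + 1)} \<inter> S \<subseteq> P - {(t, x)}"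
    and "{(t + 1, x + 1), (t + 1, x - 1)} \<inter> (P - {(t, x)}) = {}"
proof -
  obtain t x where top: "(t, x) \<in> P" "\<forall>p\<in>P. fst p \<le> t"
    using Max_in[of "fst ` P"] Max_ge[of "fst ` P"] assms(2,3) by fastforce
  have "down_closed S (P - {(t, x)})"
    using assms(1) top(2) unfolding down_closed_def by fastforce
  moreover have "{(t - 1, x - 1), (t - 1, x + 1)} \<inter> S \<subseteq> P - {(t, x)}"
    using assms(1) top(1) unfolding down_closed_def by auto
  moreover have "{(t + 1, x + 1), (t + 1, x - 1)} \<inter> (P - {(t, x)}) = {}"
    using top(2) by fastforce
  ultimately show ?thesis
    using that top(1) by blast
qed

locale flow_model = prob_space M for M :: "'a measure" +
  fixes \<pi>1 \<pi>2 \<pi>3 :: "real measure" and S :: "point set"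
    and inp :: "edge \<Rightarrow> 'a \<Rightarrow> real" and xi :: "point \<Rightarrow> 'a \<Rightarrow> real"
  assumes \<pi>: "prob_space \<pi>1" "prob_space \<pi>2" "prob_space \<pi>3"
      "sets \<pi>1 = sets borel" "sets \<pi>2 = sets borel" "sets \<pi>3 = sets borel"
    and Rmap_invariant: "distr (\<pi>1 \<Otimes>\<^sub>M (\<pi>2 \<Otimes>\<^sub>M \<pi>3)) (\<pi>1 \<Otimes>\<^sub>M (\<pi>2 \<Otimes>\<^sub>M \<pi>3)) Rmap
                            = \<pi>1 \<Otimes>\<^sub>M (\<pi>2 \<Otimes>\<^sub>M \<pi>3)"
    and hexagonal: "hexagonal_domain S"
    and indep_data: "indep_vars (\<lambda>_. borel) (\<lambda>i. case i of Inl e \<Rightarrow> inp e | Inr y \<Rightarrow> xi y)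
                       (Inl ` incoming S \<union> Inr ` S)"
    and law_incoming_asc: "\<forall>e \<in> incoming_asc S. distr M borel (inp e) = \<pi>1"
    and law_incoming_desc: "\<forall>e \<in> incoming_desc S. distr M borel (inp e) = \<pi>2"
    and law_births: "\<forall>y \<in> S. distr M borel (xi y) = \<pi>3"
begin

definition flow :: "edge \<Rightarrow> 'a \<Rightarrow> real" where
  "flow e \<omega> = flow_field S (\<lambda>e'. inp e' \<omega>) (\<lambda>y. xi y \<omega>) e"

definition state :: "edge + point \<Rightarrow> 'a \<Rightarrow> real" where
  "state i = (case i of Inl e \<Rightarrow> flow e | Inr y \<Rightarrow> xi y)"

definition state_index :: "point set \<Rightarrow> (edge + point) set" where
  "state_index P = Inl ` front S P \<union> Inr ` (S - P)"

definition front_invariant :: "point set \<Rightarrow> bool" where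
  "front_invariant P \<longleftrightarrow> indep_vars (\<lambda>_. borel) state (state_index P)
     \<and> (\<forall>e \<in> front S P. ascending e \<longrightarrow> distr M borel (flow e) = \<pi>1)
     \<and> (\<forall>e \<in> front S P. \<not> ascending e \<longrightarrow> distr M borel (flow e) = \<pi>2)"

lemma flow_incoming: "e \<in> incoming S \<Longrightarrow> flow e = inp e"
  unfolding flow_def incoming_def incoming_asc_def incoming_desc_def
  by (auto intro!: ext flow_field_incoming)

lemma front_invariant_empty: "front_invariant {}"
proof -
  have "state_index {} = Inl ` incoming S \<union> Inr ` S"
    unfolding state_index_def front_empty by simp
  then have "indep_vars (\<lambda>_. borel) state (state_index {})"
    using indep_data by (subst indep_vars_cong[OF _ _ refl]) (auto simp: state_def flow_incoming)
  moreover have "e \<in> incoming_asc S" if "e \<in> incoming S" "ascending e" for e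
    using that unfolding incoming_def incoming_asc_def incoming_desc_def ascending_def by auto
  moreover have "e \<in> incoming_desc S" if "e \<in> incoming S" "\<not> ascending e" for e
    using that unfolding incoming_def incoming_asc_def incoming_desc_def ascending_def by auto
  ultimately show ?thesis
    unfolding front_invariant_def front_empty
    using law_incoming_asc law_incoming_desc by (auto simp: flow_incoming)
qed

lemma state_index_insert:
  assumes "P \<subseteq> S" "(t, x) \<in> S" "(t, x) \<notin> P"
    and "{(t - 1, x - 1), (t - 1, x + 1)} \<inter> S \<subseteq> P"
    and "{(t + 1, x + 1), (t + 1, x - 1)} \<inter> P = {}"
  shows "Inl ((t - 1, x - 1), (t, x)) \<in> state_index P" "Inl ((t - 1, x + 1), (t, x)) \<in> state_index P"
    and "Inr (t, x) \<in> state_index P"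
    and "Inl ((t, x), (t + 1, x + 1)) \<notin> state_index P" "Inl ((t, x), (t + 1, x - 1)) \<notin> state_index P"
    and "state_index (insert (t, x) P) = {Inl ((t, x), (t + 1, x + 1)), Inl ((t, x), (t + 1, x - 1))}
           \<union> (state_index P - {Inl ((t - 1, x - 1), (t, x)), Inl ((t - 1, x + 1), (t, x)), Inr (t, x)})"
  using front_insert[OF assms] assms(2,3) unfolding state_index_def by auto

lemma state_outputs:
  assumes "(t, x) \<in> S"
  shows "state (Inl ((t, x), (t + 1, x + 1))) = (\<lambda>\<omega>. state (Inr (t, x)) \<omega> +
           max 0 (state (Inl ((t - 1, x - 1), (t, x))) \<omega> - state (Inl ((t - 1, x + 1), (t, x))) \<omega>))"
    and "state (Inl ((t, x), (t + 1, x - 1))) = (\<lambda>\<omega>. state (Inr (t, x)) \<omega> +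
           max 0 (state (Inl ((t - 1, x + 1), (t, x))) \<omega> - state (Inl ((t - 1, x - 1), (t, x))) \<omega>))"
  using flow_field_recursion[OF hexagonal assms] unfolding state_def flow_def by auto

lemma front_invariant_insert:
  assumes inv: "front_invariant P" and PS: "P \<subseteq> S" and y: "(t, x) \<in> S" "(t, x) \<notin> P"
    and below: "{(t - 1, x - 1), (t - 1, x + 1)} \<inter> S \<subseteq> P"
    and above: "{(t + 1, x + 1), (t + 1, x - 1)} \<inter> P = {}"
  shows "front_invariant (insert (t, x) P)"
proof -
  define ea eb ea' eb' where "ea = ((t - 1, x - 1), (t, x))" and "eb = ((t - 1, x + 1), (t, x))"
    and "ea' = ((t, x), (t + 1, x + 1))" and "eb' = ((t, x), (t + 1, x - 1))"
  note front = front_insert[OF PS y below above, folded ea_def eb_def ea'_def eb'_def]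
  note index = state_index_insert[OF PS y below above, folded ea_def eb_def ea'_def eb'_def]
  have asc: "ascending ea" "\<not> ascending eb" "ascending ea'" "\<not> ascending eb'"
    unfolding ascending_def ea_def eb_def ea'_def eb'_def by auto
  have indep: "indep_vars (\<lambda>_. borel) state (state_index P)"
    using inv unfolding front_invariant_def by blast
  have finite_index: "finite (state_index P)"
    using front_finite[OF hexagonal_domain_time_bounds(1)[OF hexagonal] PS]
      hexagonal_domain_time_bounds(1)[OF hexagonal] by (simp add: state_index_def)
  have distinct: "Inl ea \<noteq> Inl eb" "Inl ea \<noteq> Inr (t, x)" "Inl eb \<noteq> Inr (t, x)"
    and fresh: "Inl ea' \<notin> state_index P - {Inl ea, Inl eb, Inr (t, x)}"
      "Inl eb' \<notin> state_index P - {Inl ea, Inl eb, Inr (t, x)}" "Inl ea' \<noteq> Inl eb'"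
    using index(4,5) by (auto simp: ea_def eb_def ea'_def eb'_def)
  have laws_in: "distr M borel (state (Inl ea)) = \<pi>1" "distr M borel (state (Inl eb)) = \<pi>2"
      "distr M borel (state (Inr (t, x))) = \<pi>3"
    using inv front(1,2) asc law_births y unfolding front_invariant_def state_def by auto
  have unchanged: "\<And>i. i \<in> state_index P - {Inl ea, Inl eb, Inr (t, x)} \<Longrightarrow> state i = state i"
    by (rule refl)
  note step = burke_step[OF \<pi> Rmap_invariant indep finite_index index(1-3) distinct laws_in fresh
      unchanged state_outputs[OF y(1), folded ea_def eb_def ea'_def eb'_def]]
  have laws_out: "distr M borel (flow ea') = \<pi>1" "distr M borel (flow eb') = \<pi>2"
    using step(2,3) unfolding state_def by simp_all
  show ?thesis
    unfolding front_invariant_def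
  proof (intro conjI)
    show "indep_vars (\<lambda>_. borel) state (state_index (insert (t, x) P))"
      unfolding index(6) by (rule step(1))
    show "\<forall>e\<in>front S (insert (t, x) P). ascending e \<longrightarrow> distr M borel (flow e) = \<pi>1"
      "\<forall>e\<in>front S (insert (t, x) P). \<not> ascending e \<longrightarrow> distr M borel (flow e) = \<pi>2"
      using inv asc laws_out unfolding front(5) front_invariant_def by auto
  qed
qed

lemma front_invariant_down_closed:
  assumes "down_closed S P"
  shows "front_invariant P"
proof -
  have "finite P"
    using assms hexagonal_domain_time_bounds(1)[OF hexagonal]
    unfolding down_closed_def by (blast intro: finite_subset)
  then show ?thesis
    using assms
  proof (induction "card P" arbitrary: P)
    case 0
    then show ?case
      using front_invariant_empty by simp
  next
    case (Suc n)
    then have "P \<noteq> {}"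
      by auto
    then obtain t x where top: "(t, x) \<in> P" "down_closed S (P - {(t, x)})"
      "{(t - 1, x - 1), (t - 1, x + 1)} \<inter> S \<subseteq> P - {(t, x)}"
      "{(t + 1, x + 1), (t + 1, x - 1)} \<inter> (P - {(t, x)}) = {}"
      by (rule down_closed_remove_top[OF Suc.prems(2,1)])
    have "front_invariant (P - {(t, x)})"
      using Suc top by (intro Suc.hyps) auto
    then have "front_invariant (insert (t, x) (P - {(t, x)}))"
      by (rule front_invariant_insert[OF _ _ _ _ top(3,4)])
        (use top(1) Suc.prems(2) in \<open>auto simp: down_closed_def\<close>)
    then show ?case
      using top(1) by (simp add: insert_absorb)
  qed
qed

lemma outputs_independent_with_laws:
  "indep_vars (\<lambda>_. borel) flow (outgoing S)
   \<and> (\<forall>e \<in> outgoing_asc S. distr M borel (flow e) = \<pi>1)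
   \<and> (\<forall>e \<in> outgoing_desc S. distr M borel (flow e) = \<pi>2)"
proof -
  have "front_invariant S"
    by (rule front_invariant_down_closed) (simp add: down_closed_def)
  then have indep: "indep_vars (\<lambda>_. borel) state (Inl ` outgoing S)"
    and laws: "\<forall>e \<in> outgoing S. ascending e \<longrightarrow> distr M borel (flow e) = \<pi>1"
              "\<forall>e \<in> outgoing S. \<not> ascending e \<longrightarrow> distr M borel (flow e) = \<pi>2"
    unfolding front_invariant_def state_index_def front_full by simp_all
  have "indep_vars (\<lambda>_. borel) (\<lambda>e. state (Inl e)) (outgoing S)"
    using indep_vars_reindex[OF _ indep] by (simp add: inj_on_def)
  then have "indep_vars (\<lambda>_. borel) flow (outgoing S)"
    by (simp add: state_def)
  moreover have "outgoing_asc S \<subseteq> {e \<in> outgoing S. ascending e}"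
    and "outgoing_desc S \<subseteq> {e \<in> outgoing S. \<not> ascending e}"
    unfolding outgoing_def outgoing_asc_def outgoing_desc_def ascending_def by auto
  ultimately show ?thesis
    using laws by blast
qed

end

theorem mainTheorem3:
  fixes \<pi>1 \<pi>2 \<pi>3 :: "real measure"
    and M :: "'a measure"
    and S :: "point set"
    and inp :: "edge \<Rightarrow> 'a \<Rightarrow> real"
    and xi :: "point \<Rightarrow> 'a \<Rightarrow> real"
  assumes "prob_space \<pi>1" "prob_space \<pi>2" "prob_space \<pi>3"
    and "sets \<pi>1 = sets borel" "sets \<pi>2 = sets borel" "sets \<pi>3 = sets borel"
    and "emeasure \<pi>1 {0..} = 1" "emeasure \<pi>2 {0..} = 1" "emeasure \<pi>3 {0..} = 1"
    and "distr (\<pi>1 \<Otimes>\<^sub>M (\<pi>2 \<Otimes>\<^sub>M \<pi>3)) (\<pi>1 \<Otimes>\<^sub>M (\<pi>2 \<Otimes>\<^sub>M \<pi>3)) Rmap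
           = \<pi>1 \<Otimes>\<^sub>M (\<pi>2 \<Otimes>\<^sub>M \<pi>3)"
    and "hexagonal_domain S"
    and "prob_space M"
    and "prob_space.indep_vars M (\<lambda>_. borel)
           (\<lambda>i. case i of Inl e \<Rightarrow> inp e | Inr y \<Rightarrow> xi y)
           (Inl ` incoming S \<union> Inr ` S)"
    and "\<forall>e \<in> incoming_asc S. distr M borel (inp e) = \<pi>1"
    and "\<forall>e \<in> incoming_desc S. distr M borel (inp e) = \<pi>2"
    and "\<forall>y \<in> S. distr M borel (xi y) = \<pi>3"
  shows "prob_space.indep_vars M (\<lambda>_. borel)
           (\<lambda>e \<omega>. flow_field S (\<lambda>e'. inp e' \<omega>) (\<lambda>y. xi y \<omega>) e) (outgoing S)
       \<and> (\<forall>e \<in> outgoing_asc S.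
            distr M borel (\<lambda>\<omega>. flow_field S (\<lambda>e'. inp e' \<omega>) (\<lambda>y. xi y \<omega>) e) = \<pi>1)
       \<and> (\<forall>e \<in> outgoing_desc S.
            distr M borel (\<lambda>\<omega>. flow_field S (\<lambda>e'. inp e' \<omega>) (\<lambda>y. xi y \<omega>) e) = \<pi>2)"
proof -
  interpret flow_model M \<pi>1 \<pi>2 \<pi>3 S inp xi
    by (intro flow_model.intro flow_model_axioms.intro) (fact assms)+
  have flow: "flow = (\<lambda>e \<omega>. flow_field S (\<lambda>e'. inp e' \<omega>) (\<lambda>y. xi y \<omega>) e)"
    by (simp add: fun_eq_iff flow_def)
  show ?thesis
    using outputs_independent_with_laws unfolding flow .
qed

end
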